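(* Let $L\geq 2$ be an integer and $N=L^2$ (so $N\geq 2$), and let $\lambda,\mu\in\mathbb{C}$ be nonzero. For $J\in\mathbb{C}$ consider the polynomial potential $V_J:\mathbb{C}^N\to\mathbb{C}$, $$V_J(q)=\sum_{i\in\Lambda}\Biggl[\frac{\lambda}{4!}q_i^4-\frac{\mu^2}{2}q_i^2+\frac{J}{4}\sum_{j\in\mathcal{N}(i)}(q_i-q_j)^2\Biggr],$$ where $\Lambda$, $\mathcal N(i)$ are as in the context. Let $\mathcal{A}(N,\lambda,\mu^2)$ be the set of pairs $(q,J)\in\mathbb{C}^N\times\mathbb{C}$ such that $\frac{\partial V_J}{\partial q_i}(q)=0$ for all $i=1,\dots,N$ and $\det \mathcal{H}_{V_J}(q)=0$, where $\mathcal{H}_{V_J}(q)=\bigl(\frac{\partial^2 V_J(q)}{\partial q_i\partial q_j}\bigr)_{i,j}$ is the Hessian matrix. Let $$\mathcal{S}(N,\lambda,\mu^2)=\{J\in\mathbb{C}\mid (q,J)\in\mathcal{A}(N,\lambda,\mu^2)\text{ for some } q\in\mathbb{C}^N\}$$ be the set of couplings $J$ for which $V_J$ has at least one singular (degenerate) complex stationary point. Then $\mathcal{S}(N,\lambda,\mu^2)$ is a finite subset of $\mathbb{C}$.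
   Context: $\Lambda$ is the square lattice $\{1,\dots,L\}^2$ (periodic boundary conditions, i.e. the discrete torus $(\mathbb{Z}/L\mathbb{Z})^2$) with its $N=L^2$ sites labelled $1,\dots,N$, and $q=(q_1,\dots,q_N)$ assigns a variable $q_i$ to each site $i$. For $i\in\Lambda$, $\mathcal{N}(i)$ denotes the four nearest-neighbouring sites of $i$ on the periodic square lattice (counted with multiplicity if they coincide). This is the potential energy of the two-dimensional nearest-neighbour $\phi^4$ model with coupling $J$; here $q$ and $J$ are allowed to be complex. *)

theory Defs
  imports "HOL-Analysis.Derivative" "Jordan_Normal_Form.Determinant"
begin

text \<open>Sites of the periodic L x L lattice are labelled 0..<N (N = L^2); site k
  corresponds to the lattice point (k div L, k mod L) of the torus (Z/LZ)^2.\<close>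

definition site :: "nat \<Rightarrow> nat \<Rightarrow> nat \<Rightarrow> nat" where
  "site L a b = (a mod L) * L + (b mod L)"

text \<open>The four nearest neighbours (with multiplicity) of site k.\<close>
definition nbrs :: "nat \<Rightarrow> nat \<Rightarrow> nat list" where
  "nbrs L k = (let a = k div L; b = k mod L in
     [site L (a + 1) b, site L (a + L - 1) b, site L a (b + 1), site L a (b + L - 1)])"

definition V :: "nat \<Rightarrow> complex \<Rightarrow> complex \<Rightarrow> complex \<Rightarrow> (nat \<Rightarrow> complex) \<Rightarrow> complex" where
  "V L lam mu J q = (\<Sum>i<L^2. lam / 24 * q i ^ 4 - mu^2 / 2 * q i ^ 2
      + J / 4 * sum_list (map (\<lambda>j. (q i - q j)^2) (nbrs L i)))"

definition pderiv_at :: "((nat \<Rightarrow> complex) \<Rightarrow> complex) \<Rightarrow> nat \<Rightarrow> (nat \<Rightarrow> complex) \<Rightarrow> complex" where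
  "pderiv_at F i q = deriv (\<lambda>t. F (q(i := t))) (q i)"

definition hessian :: "((nat \<Rightarrow> complex) \<Rightarrow> complex) \<Rightarrow> nat \<Rightarrow> (nat \<Rightarrow> complex) \<Rightarrow> complex mat" where
  "hessian F N q = mat N N (\<lambda>(i, j). pderiv_at (pderiv_at F j) i q)"


definition A_set :: "nat \<Rightarrow> complex \<Rightarrow> complex \<Rightarrow> ((nat \<Rightarrow> complex) \<times> complex) set" where
  "A_set L lam mu = {(q, J). (\<forall>i\<ge>L^2. q i = 0)
      \<and> (\<forall>i<L^2. pderiv_at (V L lam mu J) i q = 0)
      \<and> det (hessian (V L lam mu J) (L^2) q) = 0}"

definition S_set :: "nat \<Rightarrow> complex \<Rightarrow> complex \<Rightarrow> complex set" where
  "S_set L lam mu = {J. \<exists>q. (q, J) \<in> A_set L lam mu}"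

end

theory Submission
  imports Defs "HOL-Library.FuncSet"
begin

text \<open>On the critical set of \<open>V\<^sub>J\<close> every cube \<open>q\<^sub>i\<^sup>3\<close> is an affine function of \<open>q\<close> with
  coefficients polynomial in \<open>J\<close>. Hence, modulo the critical equations, every polynomial in
  \<open>(J, q)\<close> reduces to a \<open>\<complex>[J]\<close>-combination of the \<open>3\<^sup>N\<close> monomials with all exponents at most 2,
  and multiplication by the Hessian determinant \<open>h\<close> acts on these monomials through a square
  matrix \<open>R(J)\<close> over \<open>\<complex>[J]\<close>. At a degenerate critical point \<open>(q, J)\<close> the vector of monomial
  values is a nonzero kernel vector of \<open>R(J)\<close>, so \<open>det R(J) = 0\<close>. At \<open>J = 0\<close> the critical points
  include the grid \<open>{0, c, -c}\<^sup>N\<close> with \<open>c\<^sup>2 = 6\<mu>\<^sup>2/\<lambda>\<close>, all of them nondegenerate, and the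
  monomials are linearly independent on this grid; so \<open>R(0)\<close> is invertible, \<open>det R\<close> is a nonzero
  polynomial, and it has only finitely many roots.\<close>

unbundle no vec_syntax

section \<open>Polynomial functions of the coupling and the field\<close>

text \<open>Multivariate polynomials in \<open>(J, q)\<close> are represented by the functions they define.\<close>

inductive_set poly_funs :: "nat \<Rightarrow> (complex \<Rightarrow> (nat \<Rightarrow> complex) \<Rightarrow> complex) set" for n where
  coeff: "(\<lambda>J q. poly c J) \<in> poly_funs n"
| var: "i < n \<Longrightarrow> (\<lambda>J q. q i) \<in> poly_funs n"
| add: "f \<in> poly_funs n \<Longrightarrow> g \<in> poly_funs n \<Longrightarrow> (\<lambda>J q. f J q + g J q) \<in> poly_funs n"
| mult: "f \<in> poly_funs n \<Longrightarrow> g \<in> poly_funs n \<Longrightarrow> (\<lambda>J q. f J q * g J q) \<in> poly_funs n"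

lemma poly_funs_const: "(\<lambda>J q. c) \<in> poly_funs n"
  using poly_funs.coeff[of "[:c:]"] by simp

lemma poly_funs_divide_const:
  "f \<in> poly_funs n \<Longrightarrow> (\<lambda>J q. f J q / c) \<in> poly_funs n"
  using poly_funs.mult[OF _ poly_funs_const, of f n "inverse c"] by (simp add: divide_inverse)

lemma poly_funs_J: "(\<lambda>J q. J) \<in> poly_funs n"
  using poly_funs.coeff[of "[:0, 1:]"] by simp

lemma poly_funs_diff:
  "f \<in> poly_funs n \<Longrightarrow> g \<in> poly_funs n \<Longrightarrow> (\<lambda>J q. f J q - g J q) \<in> poly_funs n"
proof -
  assume "f \<in> poly_funs n" "g \<in> poly_funs n"
  then have "(\<lambda>J q. f J q + (-1) * g J q) \<in> poly_funs n"
    by (intro poly_funs.add poly_funs.mult poly_funs_const)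
  then show ?thesis by simp
qed

lemma poly_funs_power: "f \<in> poly_funs n \<Longrightarrow> (\<lambda>J q. f J q ^ k) \<in> poly_funs n"
  by (induction k) (simp_all add: poly_funs_const poly_funs.mult)

lemma poly_funs_sum:
  "finite A \<Longrightarrow> (\<And>a. a \<in> A \<Longrightarrow> f a \<in> poly_funs n) \<Longrightarrow> (\<lambda>J q. \<Sum>a\<in>A. f a J q) \<in> poly_funs n"
  by (induction A rule: finite_induct) (simp_all add: poly_funs_const poly_funs.add)

lemma poly_funs_prod:
  "finite A \<Longrightarrow> (\<And>a. a \<in> A \<Longrightarrow> f a \<in> poly_funs n) \<Longrightarrow> (\<lambda>J q. \<Prod>a\<in>A. f a J q) \<in> poly_funs n"
  by (induction A rule: finite_induct) (simp_all add: poly_funs_const poly_funs.mult)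

lemma poly_funs_sum_list:
  "(\<And>a. a \<in> set xs \<Longrightarrow> f a \<in> poly_funs n) \<Longrightarrow> (\<lambda>J q. \<Sum>a\<leftarrow>xs. f a J q) \<in> poly_funs n"
  by (induction xs) (simp_all add: poly_funs_const poly_funs.add)

lemma has_field_derivative_fun_upd:
  "((\<lambda>t. (q(i := t)) k) has_field_derivative of_bool (k = i)) (at x)"
  by (cases "k = i") simp_all

lemma poly_funs_has_pderiv:
  assumes "f \<in> poly_funs n"
  shows "\<exists>g\<in>poly_funs n. \<forall>J q. ((\<lambda>t. f J (q(i := t))) has_field_derivative g J q) (at (q i))"
  using assms
proof (induction f rule: poly_funs.induct)
  case (coeff c)
  show ?case by (intro bexI[of _ "\<lambda>J q. 0"] poly_funs_const) simp
next
  case (var j)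
  show ?case
    by (intro bexI[of _ "\<lambda>J q. of_bool (j = i)"] poly_funs_const allI has_field_derivative_fun_upd)
next
  case (add f g)
  then obtain f' g' where "f' \<in> poly_funs n" "g' \<in> poly_funs n"
    and "\<And>J q. ((\<lambda>t. f J (q(i := t))) has_field_derivative f' J q) (at (q i))"
    and "\<And>J q. ((\<lambda>t. g J (q(i := t))) has_field_derivative g' J q) (at (q i))" by blast
  then show ?case
    by (intro bexI[of _ "\<lambda>J q. f' J q + g' J q"] allI DERIV_add poly_funs.add)
next
  case (mult f g)
  then obtain f' g' where "f' \<in> poly_funs n" "g' \<in> poly_funs n"
    and df: "\<And>J q. ((\<lambda>t. f J (q(i := t))) has_field_derivative f' J q) (at (q i))"
    and dg: "\<And>J q. ((\<lambda>t. g J (q(i := t))) has_field_derivative g' J q) (at (q i))" by blast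
  have "((\<lambda>t. f J (q(i := t)) * g J (q(i := t))) has_field_derivative f' J q * g J q + g' J q * f J q)
      (at (q i))" for J q
    using DERIV_mult[OF df[of J q] dg[of J q]] by simp
  with mult.hyps \<open>f' \<in> _\<close> \<open>g' \<in> _\<close> show ?case
    by (intro bexI[of _ "\<lambda>J q. f' J q * g J q + g' J q * f J q"] allI poly_funs.add poly_funs.mult)
qed

lemma poly_funs_pderiv_at:
  assumes "f \<in> poly_funs n"
  shows "(\<lambda>J q. pderiv_at (f J) i q) \<in> poly_funs n"
proof -
  obtain g where "g \<in> poly_funs n"
    and "\<And>J q. ((\<lambda>t. f J (q(i := t))) has_field_derivative g J q) (at (q i))"
    using poly_funs_has_pderiv[OF assms] by blast
  moreover from this(2) have "(\<lambda>J q. pderiv_at (f J) i q) = g"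
    unfolding pderiv_at_def by (intro ext DERIV_imp_deriv)
  ultimately show ?thesis by simp
qed

lemma poly_funs_det_hessian:
  assumes "F \<in> poly_funs n"
  shows "(\<lambda>J q. det (hessian (F J) n q)) \<in> poly_funs n"
proof -
  have "(\<lambda>J q. pderiv_at (pderiv_at (F J) j) i q) \<in> poly_funs n" for i j
    using poly_funs_pderiv_at[OF poly_funs_pderiv_at[OF assms, of j], of i] by simp
  then have "(\<lambda>J q. \<Sum>p | p permutes {0..<n}. signof p * (\<Prod>i = 0..<n. pderiv_at (pderiv_at (F J) (p i)) i q))
      \<in> poly_funs n"
    by (intro poly_funs_sum poly_funs.mult poly_funs_const poly_funs_prod) (auto simp: finite_permutations)
  moreover have "det (hessian (F J) n q) = (\<Sum>p | p permutes {0..<n}. signof p *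
      (\<Prod>i = 0..<n. pderiv_at (pderiv_at (F J) (p i)) i q))" for J q
    unfolding hessian_def by (subst det_def'[of _ n]) auto
  ultimately show ?thesis by simp
qed

section \<open>Monomials with partial degrees at most 2 and the grid \<open>{0, c, -c}\<^sup>n\<close>\<close>

definition monomial :: "nat \<Rightarrow> (nat \<Rightarrow> nat) \<Rightarrow> (nat \<Rightarrow> complex) \<Rightarrow> complex" where
  "monomial n e q = (\<Prod>i<n. q i ^ e i)"

definition reduced_exps :: "nat \<Rightarrow> (nat \<Rightarrow> nat) set" where
  "reduced_exps n = {..<n} \<rightarrow>\<^sub>E {..2}"

lemma finite_reduced_exps: "finite (reduced_exps n)"
  unfolding reduced_exps_def by (intro finite_PiE) auto

lemma monomial_restrict: "monomial n (restrict e {..<n}) = monomial n e"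
  unfolding monomial_def by (intro ext prod.cong) auto

lemma monomial_zero: "monomial n (\<lambda>_. 0) q = 1"
  unfolding monomial_def by simp

lemma monomial_add: "monomial n (\<lambda>i. a i + b i) q = monomial n a q * monomial n b q"
  unfolding monomial_def by (simp add: prod.distrib power_add)

lemma monomial_poly_funs: "(\<lambda>J q. monomial n e q) \<in> poly_funs n"
  unfolding monomial_def by (intro poly_funs_prod poly_funs_power poly_funs.var) auto

lemma monomial_fun_upd_add:
  "i < n \<Longrightarrow> monomial n (e(i := e i + k)) q = monomial n e q * q i ^ k"
  unfolding monomial_def
  by (simp add: prod.remove[of "{..<n}" i] power_add ac_simps)

definition grid_node :: "complex \<Rightarrow> nat \<Rightarrow> complex" where
  "grid_node c s = [0, c, -c] ! s"

definition grid_point :: "complex \<Rightarrow> (nat \<Rightarrow> nat) \<Rightarrow> nat \<Rightarrow> complex" where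
  "grid_point c t i = grid_node c (t i)"

text \<open>Row \<open>d\<close> of the inverse Vandermonde matrix of the nodes \<open>0, c, -c\<close>: it extracts the
  coefficient of \<open>x\<^sup>d\<close> from the values of a polynomial of degree at most 2.\<close>
definition grid_dual :: "complex \<Rightarrow> nat \<Rightarrow> nat \<Rightarrow> complex" where
  "grid_dual c d s =
    [[1, 0, 0], [0, 1 / (2 * c), -1 / (2 * c)], [-1 / c^2, 1 / (2 * c^2), 1 / (2 * c^2)]] ! d ! s"

lemma grid_dual_node:
  assumes "c \<noteq> 0" "a \<le> 2" "d \<le> 2"
  shows "(\<Sum>s\<le>2. grid_dual c d s * grid_node c s ^ a) = of_bool (a = d)"
proof -
  have "a \<in> {0, 1, 2}" "d \<in> {0, 1, 2}"
    using assms(2,3) by auto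
  then show ?thesis
    using assms(1) by (auto simp: grid_dual_def grid_node_def numeral_2_eq_2 field_simps power2_eq_square)
qed

lemma grid_dual_monomial:
  assumes "c \<noteq> 0" "d \<in> reduced_exps n" "e \<in> reduced_exps n"
  shows "(\<Sum>t\<in>reduced_exps n. (\<Prod>i<n. grid_dual c (d i) (t i)) * monomial n e (grid_point c t))
    = of_bool (e = d)"
proof -
  have "(\<Sum>t\<in>reduced_exps n. (\<Prod>i<n. grid_dual c (d i) (t i)) * monomial n e (grid_point c t))
      = (\<Sum>t\<in>reduced_exps n. \<Prod>i<n. grid_dual c (d i) (t i) * grid_node c (t i) ^ e i)"
    by (simp add: monomial_def grid_point_def prod.distrib)
  also have "\<dots> = (\<Prod>i<n. \<Sum>s\<le>2. grid_dual c (d i) s * grid_node c s ^ e i)"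
    unfolding reduced_exps_def by (rule prod_sum_PiE[symmetric]) auto
  also have "\<dots> = (\<Prod>i<n. of_bool (e i = d i))"
    using assms by (intro prod.cong refl grid_dual_node) (auto simp: reduced_exps_def)
  also have "\<dots> = of_bool (e = d)"
  proof -
    have "e = d \<longleftrightarrow> (\<forall>i<n. e i = d i)"
      using assms(2,3) unfolding reduced_exps_def by (auto intro: PiE_ext)
    then show ?thesis by auto
  qed
  finally show ?thesis .
qed

lemma grid_monomials_independent:
  assumes "c \<noteq> 0" "d \<in> reduced_exps n"
    and vanish: "\<And>t. t \<in> reduced_exps n \<Longrightarrow> (\<Sum>e\<in>reduced_exps n. U e * monomial n e (grid_point c t)) = 0"
  shows "U d = 0"
proof -
  let ?w = "\<lambda>t. \<Prod>i<n. grid_dual c (d i) (t i)"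
  have "0 = (\<Sum>t\<in>reduced_exps n. ?w t * (\<Sum>e\<in>reduced_exps n. U e * monomial n e (grid_point c t)))"
    by (simp add: vanish)
  also have "\<dots> = (\<Sum>t\<in>reduced_exps n. \<Sum>e\<in>reduced_exps n. U e * (?w t * monomial n e (grid_point c t)))"
    by (simp add: sum_distrib_left ac_simps)
  also have "\<dots> = (\<Sum>e\<in>reduced_exps n. U e * (\<Sum>t\<in>reduced_exps n. ?w t * monomial n e (grid_point c t)))"
    by (subst sum.swap) (simp add: sum_distrib_left)
  also have "\<dots> = U d"
    using assms(1,2) by (simp add: grid_dual_monomial finite_reduced_exps if_distrib cong: if_cong)
  finally show ?thesis ..
qed

section \<open>Degenerate parameters of a polynomial family of multiplication operators\<close>

interpretation poly_eval: comm_ring_hom "\<lambda>p::complex poly. poly p a" for a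
  by unfold_locales auto

lemma multiplication_matrix_invertible:
  fixes \<phi> :: "nat \<Rightarrow> 'x \<Rightarrow> complex"
  assumes mult: "\<And>x k. x \<in> P \<Longrightarrow> k < m \<Longrightarrow> h x * \<phi> k x = (\<Sum>l<m. a k l * \<phi> l x)"
    and nonzero: "\<And>x. x \<in> P \<Longrightarrow> h x \<noteq> 0"
    and indep: "\<And>u k. (\<And>x. x \<in> P \<Longrightarrow> (\<Sum>k<m. u k * \<phi> k x) = 0) \<Longrightarrow> k < m \<Longrightarrow> u k = 0"
  shows "det (mat m m (\<lambda>(k, l). a k l)) \<noteq> 0"
proof
  define A where "A = mat m m (\<lambda>(k, l). a k l)"
  have A: "A \<in> carrier_mat m m"
    unfolding A_def by simp
  assume "det (mat m m (\<lambda>(k, l). a k l)) = 0"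
  then have "det (transpose_mat A) = 0"
    using det_transpose[OF A] by (simp add: A_def)
  then obtain u where u: "u \<in> carrier_vec m" "u \<noteq> 0\<^sub>v m" "transpose_mat A *\<^sub>v u = 0\<^sub>v m"
    using det_0_iff_vec_prod_zero[of "transpose_mat A" m] A by auto
  have u_kernel: "(\<Sum>k<m. a k l * u $ k) = 0" if "l < m" for l
  proof -
    have "(transpose_mat A *\<^sub>v u) $ l = (\<Sum>k<m. a k l * u $ k)"
      using that A u(1) by (simp add: A_def scalar_prod_def lessThan_atLeast0)
    with u(3) that show ?thesis by simp
  qed
  have "(\<Sum>k<m. u $ k * \<phi> k x) = 0" if "x \<in> P" for x
  proof -
    have "h x * (\<Sum>k<m. u $ k * \<phi> k x) = (\<Sum>k<m. u $ k * (h x * \<phi> k x))"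
      by (simp add: sum_distrib_left ac_simps)
    also have "\<dots> = (\<Sum>k<m. u $ k * (\<Sum>l<m. a k l * \<phi> l x))"
      by (intro sum.cong refl) (simp add: mult[OF that])
    also have "\<dots> = (\<Sum>k<m. \<Sum>l<m. a k l * u $ k * \<phi> l x)"
      by (simp add: sum_distrib_left ac_simps)
    also have "\<dots> = (\<Sum>l<m. (\<Sum>k<m. a k l * u $ k) * \<phi> l x)"
      by (subst sum.swap) (simp add: sum_distrib_right)
    also have "\<dots> = 0"
      by (simp add: u_kernel)
    finally show ?thesis
      using nonzero[OF that] by simp
  qed
  then have "u = 0\<^sub>v m"
    using indep[of "\<lambda>k. u $ k"] u(1) by (auto simp: vec_eq_iff)
  with u(2) show False ..
qed

text \<open>On the constraint set, multiplication by \<open>h\<close> acts on the functions \<open>\<phi>\<^sub>k\<close> through the matrix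
  \<open>R(J) = (r\<^sub>k\<^sub>l(J))\<close>. A zero of \<open>h\<close> yields the nonzero kernel vector \<open>(\<phi>\<^sub>k(x))\<^sub>k\<close> of \<open>R(J)\<close>,
  while \<open>R(J\<^sub>0)\<close> is invertible. Hence \<open>det R\<close> is a nonzero polynomial whose roots contain all
  degenerate parameters.\<close>

lemma finite_degenerate_params_nat:
  fixes \<phi> :: "nat \<Rightarrow> 'x \<Rightarrow> complex" and r :: "nat \<Rightarrow> nat \<Rightarrow> complex poly"
  assumes mult: "\<And>J x k. C J x \<Longrightarrow> k < m \<Longrightarrow> h J x * \<phi> k x = (\<Sum>l<m. poly (r k l) J * \<phi> l x)"
    and nonzero: "\<And>J x. C J x \<Longrightarrow> \<exists>k<m. \<phi> k x \<noteq> 0"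
    and regular: "\<And>x. x \<in> P \<Longrightarrow> C J\<^sub>0 x \<and> h J\<^sub>0 x \<noteq> 0"
    and indep: "\<And>u k. (\<And>x. x \<in> P \<Longrightarrow> (\<Sum>k<m. u k * \<phi> k x) = 0) \<Longrightarrow> k < m \<Longrightarrow> u k = 0"
  shows "finite {J. \<exists>x. C J x \<and> h J x = 0}"
proof -
  define R where "R = mat m m (\<lambda>(k, l). r k l)"
  define M where "M J = map_mat (\<lambda>p. poly p J) R" for J
  have M: "M J \<in> carrier_mat m m" for J
    unfolding M_def R_def by simp
  have M_eq: "M J = mat m m (\<lambda>(k, l). poly (r k l) J)" for J
    unfolding M_def R_def by auto
  have det_M: "det (M J) = poly (det R) J" for J
    unfolding M_def by (rule poly_eval.hom_det)
  have "det (M J) = 0" if "C J x" "h J x = 0" for J x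
  proof -
    define v where "v = vec m (\<lambda>l. \<phi> l x)"
    have "v \<noteq> 0\<^sub>v m"
      using nonzero[OF \<open>C J x\<close>] unfolding v_def by (auto simp: vec_eq_iff)
    moreover have "M J *\<^sub>v v = 0\<^sub>v m"
      using mult[OF \<open>C J x\<close>] \<open>h J x = 0\<close>
      by (auto simp: vec_eq_iff v_def scalar_prod_def M_eq lessThan_atLeast0)
    moreover have "v \<in> carrier_vec m"
      unfolding v_def by simp
    ultimately show ?thesis
      using det_0_iff_vec_prod_zero[OF M] by blast
  qed
  then have "{J. \<exists>x. C J x \<and> h J x = 0} \<subseteq> {J. poly (det R) J = 0}"
    by (auto simp: det_M)
  moreover have "det (M J\<^sub>0) \<noteq> 0"
    unfolding M_eq
  proof (rule multiplication_matrix_invertible[where P = P and \<phi> = \<phi> and h = "h J\<^sub>0"])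
    show "h J\<^sub>0 x * \<phi> k x = (\<Sum>l<m. poly (r k l) J\<^sub>0 * \<phi> l x)" if "x \<in> P" "k < m" for x k
      using mult regular that by blast
    show "h J\<^sub>0 x \<noteq> 0" if "x \<in> P" for x
      using regular that by blast
    show "u k = 0" if "\<And>x. x \<in> P \<Longrightarrow> (\<Sum>k<m. u k * \<phi> k x) = 0" "k < m" for u k
      using indep that by blast
  qed
  then have "det R \<noteq> 0"
    by (auto simp: det_M)
  ultimately show ?thesis
    using poly_roots_finite finite_subset by blast
qed

lemma finite_degenerate_params:
  fixes E :: "'e set" and \<phi> :: "'e \<Rightarrow> 'x \<Rightarrow> complex" and r :: "'e \<Rightarrow> 'e \<Rightarrow> complex poly"
  assumes "finite E"
    and mult: "\<And>J x e. C J x \<Longrightarrow> e \<in> E \<Longrightarrow> h J x * \<phi> e x = (\<Sum>e'\<in>E. poly (r e e') J * \<phi> e' x)"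
    and nonzero: "\<And>J x. C J x \<Longrightarrow> \<exists>e\<in>E. \<phi> e x \<noteq> 0"
    and regular: "\<And>x. x \<in> P \<Longrightarrow> C J\<^sub>0 x \<and> h J\<^sub>0 x \<noteq> 0"
    and indep: "\<And>U e. (\<And>x. x \<in> P \<Longrightarrow> (\<Sum>e\<in>E. U e * \<phi> e x) = 0) \<Longrightarrow> e \<in> E \<Longrightarrow> U e = 0"
  shows "finite {J. \<exists>x. C J x \<and> h J x = 0}"
proof -
  obtain enum where enum: "bij_betw enum {..<card E} E"
    using ex_bij_betw_nat_finite[OF \<open>finite E\<close>] by (auto simp: lessThan_atLeast0)
  have reindex: "(\<Sum>e\<in>E. f e) = (\<Sum>k<card E. f (enum k))" for f :: "'e \<Rightarrow> complex"
    by (rule sum.reindex_bij_betw[OF enum, symmetric])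
  have enum_in: "k < card E \<Longrightarrow> enum k \<in> E" for k
    using enum by (auto simp: bij_betw_def)
  show ?thesis
  proof (rule finite_degenerate_params_nat[where \<phi> = "\<lambda>k. \<phi> (enum k)"
        and r = "\<lambda>k l. r (enum k) (enum l)" and m = "card E" and P = P and J\<^sub>0 = J\<^sub>0])
    show "h J x * \<phi> (enum k) x = (\<Sum>l<card E. poly (r (enum k) (enum l)) J * \<phi> (enum l) x)"
      if "C J x" "k < card E" for J x k
      using mult[OF that(1) enum_in[OF that(2)]] by (simp add: reindex)
    show "\<exists>k<card E. \<phi> (enum k) x \<noteq> 0" if C: "C J x" for J x
    proof -
      obtain e where "e \<in> E" "\<phi> e x \<noteq> 0"
        using nonzero[OF C] by blast
      moreover from \<open>e \<in> E\<close> obtain k where "k < card E" "e = enum k"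
        using enum by (metis bij_betw_def imageE lessThan_iff)
      ultimately show ?thesis by blast
    qed
    show "C J\<^sub>0 x \<and> h J\<^sub>0 x \<noteq> 0" if "x \<in> P" for x
      using regular[OF that] .
    show "u k = 0" if "\<And>x. x \<in> P \<Longrightarrow> (\<Sum>k<card E. u k * \<phi> (enum k) x) = 0" "k < card E"
      for u k
    proof -
      define U where "U e = u (inv_into {..<card E} enum e)" for e
      have U_enum: "l < card E \<Longrightarrow> U (enum l) = u l" for l
        using enum by (simp add: U_def bij_betw_def inv_into_f_f)
      have "(\<Sum>e\<in>E. U e * \<phi> e x) = (\<Sum>l<card E. u l * \<phi> (enum l) x)" for x
        unfolding reindex by (intro sum.cong refl) (simp add: U_enum)
      then have "U (enum k) = 0"
        using indep[of U "enum k"] that enum_in by auto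
      then show ?thesis
        using U_enum[OF \<open>k < card E\<close>] by simp
    qed
  qed
qed

section \<open>Reduction modulo cubic relations\<close>

inductive_set affine_funs :: "nat \<Rightarrow> (complex \<Rightarrow> (nat \<Rightarrow> complex) \<Rightarrow> complex) set" for n where
  coeff: "(\<lambda>J q. poly c J) \<in> affine_funs n"
| linear: "i < n \<Longrightarrow> (\<lambda>J q. poly c J * q i) \<in> affine_funs n"
| add: "f \<in> affine_funs n \<Longrightarrow> g \<in> affine_funs n \<Longrightarrow> (\<lambda>J q. f J q + g J q) \<in> affine_funs n"

lemma affine_funs_const: "(\<lambda>J q. a) \<in> affine_funs n"
  using affine_funs.coeff[of "[:a:]"] by simp

lemma affine_funs_scale:
  "f \<in> affine_funs n \<Longrightarrow> (\<lambda>J q. poly c J * f J q) \<in> affine_funs n"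
proof (induction f rule: affine_funs.induct)
  case (coeff d)
  show ?case using affine_funs.coeff[of "c * d"] by simp
next
  case (linear i d)
  show ?case using affine_funs.linear[OF linear, of "c * d"] by (simp add: ac_simps)
next
  case (add f g)
  show ?case using affine_funs.add[OF add.IH] by (simp add: distrib_left)
qed

lemma affine_funs_const_mult:
  "f \<in> affine_funs n \<Longrightarrow> (\<lambda>J q. a * f J q) \<in> affine_funs n"
  using affine_funs_scale[of f n "[:a:]"] by simp

lemma affine_funs_mult_const:
  "f \<in> affine_funs n \<Longrightarrow> (\<lambda>J q. f J q * a) \<in> affine_funs n"
  using affine_funs_const_mult[of f n a] by (simp add: mult.commute)

lemma affine_funs_J_mult:
  "f \<in> affine_funs n \<Longrightarrow> (\<lambda>J q. J * f J q) \<in> affine_funs n"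
  using affine_funs_scale[of f n "[:0, 1:]"] by simp

lemma affine_funs_var: "i < n \<Longrightarrow> (\<lambda>J q. q i) \<in> affine_funs n"
  using affine_funs.linear[of i n 1] by simp

lemma affine_funs_diff:
  "f \<in> affine_funs n \<Longrightarrow> g \<in> affine_funs n \<Longrightarrow> (\<lambda>J q. f J q - g J q) \<in> affine_funs n"
  using affine_funs.add[OF _ affine_funs_const_mult, of f n g "-1"] by simp

lemma affine_funs_sum:
  "finite A \<Longrightarrow> (\<And>a. a \<in> A \<Longrightarrow> f a \<in> affine_funs n) \<Longrightarrow> (\<lambda>J q. \<Sum>a\<in>A. f a J q) \<in> affine_funs n"
  by (induction A rule: finite_induct) (simp_all add: affine_funs_const affine_funs.add)

lemma affine_funs_sum_list:
  "(\<And>a. a \<in> set xs \<Longrightarrow> f a \<in> affine_funs n) \<Longrightarrow> (\<lambda>J q. \<Sum>a\<leftarrow>xs. f a J q) \<in> affine_funs n"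
  by (induction xs) (simp_all add: affine_funs_const affine_funs.add)

lemma affine_funs_divide_const:
  "f \<in> affine_funs n \<Longrightarrow> (\<lambda>J q. f J q / a) \<in> affine_funs n"
  using affine_funs_const_mult[of f n "inverse a"] by (simp add: divide_inverse_commute)

locale cubic_relations =
  fixes n :: nat and C :: "complex \<Rightarrow> (nat \<Rightarrow> complex) \<Rightarrow> bool"
  assumes cube_affine: "i < n \<Longrightarrow> \<exists>g\<in>affine_funs n. \<forall>J q. C J q \<longrightarrow> q i ^ 3 = g J q"
begin

definition reducible :: "(complex \<Rightarrow> (nat \<Rightarrow> complex) \<Rightarrow> complex) \<Rightarrow> bool" where
  "reducible f \<longleftrightarrow>
    (\<exists>r. \<forall>J q. C J q \<longrightarrow> f J q = (\<Sum>e\<in>reduced_exps n. poly (r e) J * monomial n e q))"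

lemma reducible_cong: "(\<And>J q. C J q \<Longrightarrow> f J q = g J q) \<Longrightarrow> reducible g \<Longrightarrow> reducible f"
  unfolding reducible_def by metis

lemma reducible_zero: "reducible (\<lambda>J q. 0)"
  unfolding reducible_def by (intro exI[of _ "\<lambda>_. 0"]) simp

lemma reducible_add: "reducible f \<Longrightarrow> reducible g \<Longrightarrow> reducible (\<lambda>J q. f J q + g J q)"
  unfolding reducible_def
proof (elim exE)
  fix r s
  assume "\<forall>J q. C J q \<longrightarrow> f J q = (\<Sum>e\<in>reduced_exps n. poly (r e) J * monomial n e q)"
    and "\<forall>J q. C J q \<longrightarrow> g J q = (\<Sum>e\<in>reduced_exps n. poly (s e) J * monomial n e q)"
  then show "\<exists>t. \<forall>J q. C J q \<longrightarrow>
      f J q + g J q = (\<Sum>e\<in>reduced_exps n. poly (t e) J * monomial n e q)"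
    by (intro exI[of _ "\<lambda>e. r e + s e"]) (simp add: sum.distrib distrib_right)
qed

lemma reducible_scale: "reducible f \<Longrightarrow> reducible (\<lambda>J q. poly c J * f J q)"
  unfolding reducible_def
proof (elim exE)
  fix r assume "\<forall>J q. C J q \<longrightarrow> f J q = (\<Sum>e\<in>reduced_exps n. poly (r e) J * monomial n e q)"
  then show "\<exists>s. \<forall>J q. C J q \<longrightarrow> poly c J * f J q = (\<Sum>e\<in>reduced_exps n. poly (s e) J * monomial n e q)"
    by (intro exI[of _ "\<lambda>e. c * r e"]) (simp add: sum_distrib_left mult.assoc)
qed

lemma reducible_sum:
  "finite A \<Longrightarrow> (\<And>a. a \<in> A \<Longrightarrow> reducible (f a)) \<Longrightarrow> reducible (\<lambda>J q. \<Sum>a\<in>A. f a J q)"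
  by (induction A rule: finite_induct) (simp_all add: reducible_zero reducible_add)

lemma reducible_reduced_monomial:
  assumes "e \<in> reduced_exps n"
  shows "reducible (\<lambda>J q. monomial n e q)"
proof -
  have "\<forall>J q. C J q \<longrightarrow>
      monomial n e q = (\<Sum>e'\<in>reduced_exps n. poly [:of_bool (e' = e):] J * monomial n e' q)"
    using assms finite_reduced_exps by (simp add: if_distrib cong: if_cong)
  then show ?thesis
    unfolding reducible_def by (rule exI[of _ "\<lambda>e'. [:of_bool (e' = e):]"])
qed

text \<open>Induction on the total degree: a factor \<open>q\<^sub>i\<^sup>3\<close> is traded for an affine function, which lowers
  the degree by at least 2.\<close>
lemma reducible_monomial: "reducible (\<lambda>J q. monomial n b q)"
proof (induction "\<Sum>i<n. b i" arbitrary: b rule: less_induct)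
  case less
  show ?case
  proof (cases "\<forall>i<n. b i \<le> 2")
    case True
    then have "restrict b {..<n} \<in> reduced_exps n"
      by (auto simp: reduced_exps_def)
    from reducible_reduced_monomial[OF this] show ?thesis
      by (simp add: monomial_restrict)
  next
    case False
    then obtain i where i: "i < n" "b i \<ge> 3" by auto
    define b' where "b' = b(i := b i - 3)"
    have b: "b = b'(i := b' i + 3)"
      using i(2) by (auto simp: b'_def)
    have degree: "(\<Sum>k<n. (b'(j := b' j + d)) k) = (\<Sum>k<n. b' k) + d" if "j < n" for j d
      using that by (simp add: sum.remove[of "{..<n}" j])
    have "(\<Sum>k<n. b k) = (\<Sum>k<n. b' k) + 3"
      using degree[OF i(1), of 3] by (simp only: b[symmetric])
    then have lower: "reducible (\<lambda>J q. monomial n (b'(j := b' j + d)) q)" if "j < n" "d < 3" for j d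
      using degree[OF that(1), of d] that(2) by (intro less) linarith
    have reduce_affine: "reducible (\<lambda>J q. monomial n b' q * g J q)" if "g \<in> affine_funs n" for g
      using that
    proof (induction g rule: affine_funs.induct)
      case (coeff c)
      show ?case
        using reducible_scale[OF lower[OF i(1), of 0]] by (simp add: mult.commute)
    next
      case (linear j c)
      have shift: "monomial n b' q * (poly c J * q j) = poly c J * monomial n (b'(j := b' j + 1)) q"
        for J q
        by (subst monomial_fun_upd_add[OF linear]) simp
      show ?case
        unfolding shift by (rule reducible_scale[OF lower[OF linear]]) simp
    next
      case (add f g)
      show ?case
        using reducible_add[OF add.IH] by (simp add: distrib_left)
    qed
    obtain g where g: "g \<in> affine_funs n" and cube: "\<And>J q. C J q \<Longrightarrow> q i ^ 3 = g J q"
      using cube_affine[OF i(1)] by blast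
    from reduce_affine[OF g] have "reducible (\<lambda>J q. monomial n b' q * g J q)" .
    moreover have "monomial n b q = monomial n b' q * g J q" if "C J q" for J q
      using cube[OF that] by (subst b) (simp add: monomial_fun_upd_add[OF i(1)])
    ultimately show ?thesis
      by (rule reducible_cong[rotated])
  qed
qed

lemma reducible_mult:
  assumes "reducible f" "reducible g"
  shows "reducible (\<lambda>J q. f J q * g J q)"
proof -
  obtain r s
    where r: "\<And>J q. C J q \<Longrightarrow> f J q = (\<Sum>e\<in>reduced_exps n. poly (r e) J * monomial n e q)"
      and s: "\<And>J q. C J q \<Longrightarrow> g J q = (\<Sum>e\<in>reduced_exps n. poly (s e) J * monomial n e q)"
    using assms unfolding reducible_def by blast
  have "reducible (\<lambda>J q. \<Sum>e\<in>reduced_exps n. \<Sum>e'\<in>reduced_exps n.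
      poly (r e * s e') J * monomial n (\<lambda>i. e i + e' i) q)"
    by (intro reducible_sum finite_reduced_exps reducible_scale reducible_monomial)
  moreover have "f J q * g J q = (\<Sum>e\<in>reduced_exps n. \<Sum>e'\<in>reduced_exps n.
      poly (r e * s e') J * monomial n (\<lambda>i. e i + e' i) q)" if "C J q" for J q
    unfolding r[OF that] s[OF that] sum_product by (simp add: monomial_add ac_simps)
  ultimately show ?thesis
    by (rule reducible_cong[rotated])
qed

lemma reducible_poly_funs: "f \<in> poly_funs n \<Longrightarrow> reducible f"
proof (induction f rule: poly_funs.induct)
  case (coeff c)
  show ?case
    using reducible_scale[OF reducible_monomial[of "\<lambda>_. 0"], of c] by (simp add: monomial_zero)
next
  case (var i)
  have "monomial n ((\<lambda>_. 0)(i := 0 + 1)) q = q i" for q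
    by (subst monomial_fun_upd_add[OF var]) (simp add: monomial_zero)
  with reducible_monomial[of "(\<lambda>_. 0)(i := 0 + 1)"] show ?case
    by simp
next
  case (add f g)
  from add.IH show ?case by (rule reducible_add)
next
  case (mult f g)
  from mult.IH show ?case by (rule reducible_mult)
qed

lemma finite_degenerate_couplings:
  assumes h: "h \<in> poly_funs n" and "c \<noteq> 0"
    and grid: "\<And>t. t \<in> reduced_exps n \<Longrightarrow> C J\<^sub>0 (grid_point c t) \<and> h J\<^sub>0 (grid_point c t) \<noteq> 0"
  shows "finite {J. \<exists>q. C J q \<and> h J q = 0}"
proof -
  have "\<forall>e. \<exists>r. \<forall>J q. C J q \<longrightarrow>
      h J q * monomial n e q = (\<Sum>e'\<in>reduced_exps n. poly (r e') J * monomial n e' q)"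
    using reducible_poly_funs[OF poly_funs.mult[OF h monomial_poly_funs]] unfolding reducible_def by blast
  then obtain r where r: "\<And>e J q. C J q \<Longrightarrow>
      h J q * monomial n e q = (\<Sum>e'\<in>reduced_exps n. poly (r e e') J * monomial n e' q)"
    by metis
  show ?thesis
  proof (rule finite_degenerate_params[where E = "reduced_exps n" and \<phi> = "monomial n" and r = r
        and P = "grid_point c ` reduced_exps n" and J\<^sub>0 = J\<^sub>0])
    show "\<exists>e\<in>reduced_exps n. monomial n e q \<noteq> 0" for q
      using monomial_restrict[of n "\<lambda>_. 0"]
      by (intro bexI[of _ "restrict (\<lambda>_. 0) {..<n}"]) (auto simp: monomial_zero reduced_exps_def)
  qed (use finite_reduced_exps r grid grid_monomials_independent[OF \<open>c \<noteq> 0\<close>] in auto)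
qed

end

section \<open>The \<open>\<phi>\<^sup>4\<close> potential\<close>

lemma has_field_derivative_sum_list:
  "(\<And>a. a \<in> set xs \<Longrightarrow> (f a has_field_derivative f' a) (at x within s)) \<Longrightarrow>
    ((\<lambda>t. \<Sum>a\<leftarrow>xs. f a t) has_field_derivative (\<Sum>a\<leftarrow>xs. f' a)) (at x within s)"
proof (induction xs)
  case (Cons a xs)
  then have "(f a has_field_derivative f' a) (at x within s)"
    and "((\<lambda>t. \<Sum>a\<leftarrow>xs. f a t) has_field_derivative (\<Sum>a\<leftarrow>xs. f' a)) (at x within s)"
    by simp_all
  from DERIV_add[OF this] show ?case by simp
qed simp

definition coupling_grad :: "nat \<Rightarrow> nat \<Rightarrow> (nat \<Rightarrow> complex) \<Rightarrow> complex" where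
  "coupling_grad L i q =
    (\<Sum>k<L^2. \<Sum>j\<leftarrow>nbrs L k. (q k - q j) * (of_bool (k = i) - of_bool (j = i))) / 2"

lemma pderiv_V:
  assumes "i < L^2"
  shows "pderiv_at (V L lam mu J) i q = lam / 6 * q i ^ 3 - mu^2 * q i + J * coupling_grad L i q"
proof -
  let ?\<delta> = "\<lambda>k. of_bool (k = i) :: complex"
  have "((\<lambda>t. V L lam mu J (q(i := t))) has_field_derivative
      (\<Sum>k<L^2. ?\<delta> k * (lam / 6 * q k ^ 3 - mu^2 * q k)
        + J / 4 * (\<Sum>j\<leftarrow>nbrs L k. 2 * (q k - q j) * (?\<delta> k - ?\<delta> j)))) (at (q i))"
    unfolding V_def
    by (intro DERIV_sum DERIV_add DERIV_cmult has_field_derivative_sum_list)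
      (rule derivative_eq_intros has_field_derivative_fun_upd refl | simp add: algebra_simps)+
  then have "pderiv_at (V L lam mu J) i q = (\<Sum>k<L^2. ?\<delta> k * (lam / 6 * q k ^ 3 - mu^2 * q k)
        + J / 4 * (\<Sum>j\<leftarrow>nbrs L k. 2 * (q k - q j) * (?\<delta> k - ?\<delta> j)))"
    unfolding pderiv_at_def by (rule DERIV_imp_deriv)
  also have "\<dots> = lam / 6 * q i ^ 3 - mu^2 * q i + J * coupling_grad L i q"
  proof -
    have "(\<Sum>j\<leftarrow>nbrs L k. 2 * (q k - q j) * (?\<delta> k - ?\<delta> j))
        = 2 * (\<Sum>j\<leftarrow>nbrs L k. (q k - q j) * (?\<delta> k - ?\<delta> j))" for k
      by (simp only: mult.assoc sum_list_const_mult)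
    moreover have "(\<Sum>k<L^2. ?\<delta> k * (lam / 6 * q k ^ 3 - mu^2 * q k)) = lam / 6 * q i ^ 3 - mu^2 * q i"
      using assms by (simp add: sum_of_bool_mult_eq)
    ultimately show ?thesis
      by (simp add: coupling_grad_def sum.distrib sum_distrib_left sum_divide_distrib)
  qed
  finally show ?thesis .
qed

lemma site_less: "0 < L \<Longrightarrow> site L a b < L^2"
proof -
  assume "0 < L"
  then have "a mod L \<le> L - 1" "b mod L < L"
    by (simp_all add: less_Suc_eq_le[symmetric])
  then have "(a mod L) * L + b mod L < (L - 1) * L + L"
    by (intro add_le_less_mono mult_le_mono1)
  also have "\<dots> = L^2"
    using \<open>0 < L\<close> by (simp add: power2_eq_square algebra_simps)
  finally show ?thesis
    by (simp add: site_def)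
qed

lemma nbrs_less: "0 < L \<Longrightarrow> j \<in> set (nbrs L i) \<Longrightarrow> j < L^2"
  unfolding nbrs_def Let_def using site_less by auto

lemma V_poly_funs: "0 < L \<Longrightarrow> (\<lambda>J q. V L lam mu J q) \<in> poly_funs (L^2)"
  unfolding V_def
  by (intro poly_funs_sum poly_funs_sum_list poly_funs.add poly_funs.mult poly_funs_diff
      poly_funs_const poly_funs_J poly_funs_divide_const poly_funs_power poly_funs.var)
    (auto dest: nbrs_less)

lemma coupling_grad_affine_funs:
  assumes "0 < L"
  shows "(\<lambda>J q. coupling_grad L i q) \<in> affine_funs (L^2)"
  unfolding coupling_grad_def using assms
  by (intro affine_funs_divide_const affine_funs_sum affine_funs_sum_list affine_funs_mult_const
      affine_funs_diff affine_funs_var) (auto dest: nbrs_less)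

definition phi4_critical :: "nat \<Rightarrow> complex \<Rightarrow> complex \<Rightarrow> complex \<Rightarrow> (nat \<Rightarrow> complex) \<Rightarrow> bool" where
  "phi4_critical L lam mu J q \<longleftrightarrow> (\<forall>i<L^2. pderiv_at (V L lam mu J) i q = 0)"

lemma phi4_cubic_relations:
  assumes "0 < L" "lam \<noteq> 0"
  shows "cubic_relations (L^2) (phi4_critical L lam mu)"
proof
  fix i assume "i < L^2"
  let ?g = "\<lambda>J q. 6 / lam * (mu^2 * q i - J * coupling_grad L i q)"
  have g_affine: "?g \<in> affine_funs (L^2)"
    using \<open>i < L^2\<close> coupling_grad_affine_funs[OF assms(1)]
    by (intro affine_funs_const_mult affine_funs_diff affine_funs_J_mult affine_funs_var)
  have g_cube: "q i ^ 3 = ?g J q" if "phi4_critical L lam mu J q" for J q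
    using that \<open>i < L^2\<close> assms(2)
    by (auto simp: phi4_critical_def pderiv_V field_simps)
  show "\<exists>g\<in>affine_funs (L^2). \<forall>J q. phi4_critical L lam mu J q \<longrightarrow> q i ^ 3 = g J q"
    using g_affine g_cube by (intro bexI[of _ ?g] allI impI)
qed

lemma pderiv_V_zero:
  "i < L^2 \<Longrightarrow> pderiv_at (V L lam mu 0) i = (\<lambda>q. lam / 6 * q i ^ 3 - mu^2 * q i)"
  by (intro ext) (simp add: pderiv_V)

lemma hessian_V_zero:
  assumes "i < L^2" "j < L^2"
  shows "pderiv_at (pderiv_at (V L lam mu 0) j) i q = of_bool (i = j) * (lam / 2 * q j ^ 2 - mu^2)"
proof -
  have "((\<lambda>t. lam / 6 * (q(i := t)) j ^ 3 - mu^2 * (q(i := t)) j) has_field_derivative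
      of_bool (i = j) * (lam / 2 * q j ^ 2 - mu^2)) (at (q i))"
    by (cases "i = j") (auto intro!: derivative_eq_intros)
  then show ?thesis
    unfolding pderiv_V_zero[OF assms(2)] pderiv_at_def by (rule DERIV_imp_deriv)
qed

lemma det_hessian_V_zero:
  "det (hessian (V L lam mu 0) (L^2) q) = (\<Prod>i\<leftarrow>[0..<L^2]. lam / 2 * q i ^ 2 - mu^2)"
proof -
  let ?H = "hessian (V L lam mu 0) (L^2) q"
  have H: "?H \<in> carrier_mat (L^2) (L^2)"
    by (simp add: hessian_def)
  have H_index: "i < L^2 \<Longrightarrow> j < L^2 \<Longrightarrow> ?H $$ (i, j) = of_bool (i = j) * (lam / 2 * q j ^ 2 - mu^2)"
    for i j
    by (simp add: hessian_def hessian_V_zero)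
  have "upper_triangular ?H"
    using H by (auto simp: upper_triangular_def H_index)
  then have "det ?H = prod_list (diag_mat ?H)"
    using H by (rule det_upper_triangular)
  also have "\<dots> = (\<Prod>i\<leftarrow>[0..<L^2]. lam / 2 * q i ^ 2 - mu^2)"
    using H by (auto simp: diag_mat_def H_index intro!: arg_cong[where f = prod_list])
  finally show ?thesis .
qed

lemma phi4_grid_regular:
  assumes "lam \<noteq> 0" "mu \<noteq> 0" "c^2 = 6 * mu^2 / lam" "t \<in> reduced_exps (L^2)"
  shows "phi4_critical L lam mu 0 (grid_point c t) \<and> det (hessian (V L lam mu 0) (L^2) (grid_point c t)) \<noteq> 0"
proof -
  have node: "grid_point c t i = 0 \<or> grid_point c t i ^ 2 = c^2" if "i < L^2" for i
  proof -
    have "t i \<le> 2"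
      using assms(4) that by (auto simp: reduced_exps_def PiE_iff)
    then have "t i = 0 \<or> t i = 1 \<or> t i = 2"
      by auto
    then show ?thesis
      by (auto simp: grid_point_def grid_node_def)
  qed
  have "lam / 6 * x ^ 3 - mu^2 * x = 0 \<and> lam / 2 * x ^ 2 - mu^2 \<noteq> 0"
    if "x = 0 \<or> x^2 = c^2" for x :: complex
  proof -
    have "lam * x^2 = 0 \<or> lam * x^2 = 6 * mu^2"
      using that assms(1,3) by auto
    moreover have "lam / 6 * x ^ 3 - mu^2 * x = x * (lam * x^2 - 6 * mu^2) / 6"
      and "lam / 2 * x ^ 2 - mu^2 = (lam * x^2 - 2 * mu^2) / 2"
      by (simp_all add: field_simps power2_eq_square power3_eq_cube)
    ultimately show ?thesis
      using assms(1,2) by auto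
  qed
  with node show ?thesis
    by (auto simp: phi4_critical_def pderiv_V_zero det_hessian_V_zero prod_list_zero_iff)
qed

theorem proposition1:
  fixes L :: nat and lam mu :: complex
  assumes "L \<ge> 2" and "lam \<noteq> 0" and "mu \<noteq> 0"
  shows "finite (S_set L lam mu)"
proof -
  have "0 < L"
    using assms(1) by simp
  interpret cubic_relations "L^2" "phi4_critical L lam mu"
    using \<open>0 < L\<close> assms(2) by (rule phi4_cubic_relations)
  define c where "c = csqrt (6 * mu^2 / lam)"
  have c: "c^2 = 6 * mu^2 / lam" "c \<noteq> 0"
    using assms(2,3) by (auto simp: c_def)
  have "finite {J. \<exists>q. phi4_critical L lam mu J q \<and> det (hessian (V L lam mu J) (L^2) q) = 0}"
    using poly_funs_det_hessian[OF V_poly_funs[OF \<open>0 < L\<close>]] c(2)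
    by (rule finite_degenerate_couplings) (use phi4_grid_regular[OF assms(2,3) c(1)] in blast)
  moreover have "S_set L lam mu
      \<subseteq> {J. \<exists>q. phi4_critical L lam mu J q \<and> det (hessian (V L lam mu J) (L^2) q) = 0}"
    by (auto simp: S_set_def A_set_def phi4_critical_def)
  ultimately show ?thesis
    by (rule finite_subset[rotated])
qed

end
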